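(* Let $f_j:[x_i,\infty)\to\mathbb{R}^+$, $j=1,2,3$, be probability density functions with $$f_1(x)\sim C_1e^{-x},\qquad f_2(x)\sim C_2e^{-\xi x},\qquad f_3(x)\sim C_3x^{-\eta}\qquad(x\to\infty),$$ for some $\eta>1$, $\xi\in(0,1)$ and $C_j>0$. Then each $\mathcal{U}_2[f_j]$ has unbounded support, and: (1) $\mathcal{U}_2[f_1]$ decays exponentially, and consequently $\sigma_p[\mathcal{U}_2[f_1]]<\infty$ for every $p>0$; (2) $\mathcal{U}_2[f_2]$ decays as $[(1-\xi)|u|+k]^{\frac1{\xi-1}}$ (for some constant $k$), and $\sigma_p[\mathcal{U}_2[f_2]]<\infty$ for every $p\in\left(0,\frac{\xi}{1-\xi}\right)$; (3) $\mathcal{U}_2[f_3]$ has no finite moments: $\sigma_p[\mathcal{U}_2[f_3]]=\infty$ for every $p>0$.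
   Context: Up transform with parameter $2$: for a probability density $f$ on $[x_i,\infty)$, $\mathcal{U}_2[f](u)=e^{-x(u)}$, where $x(u)$ is the inverse of $u(x)=-\int_{x_i}^x e^{v}f(v)\,dv$ (so $u'(x)=-e^{x}f(x)$; defined up to an additive constant). For a density $h$, $\sigma_p[h]=\left(\int|u|^ph(u)\,du\right)^{1/p}$. *)

theory Defs
  imports "HOL-Analysis.Analysis" "HOL-Library.Landau_Symbols"
begin

definition up_u :: "real \<Rightarrow> (real \<Rightarrow> real) \<Rightarrow> real \<Rightarrow> real" where
  "up_u xi f x = - integral {xi..x} (\<lambda>v. exp v * f v)"

text \<open>Up transform with parameter 2: U_2[f](u) = exp(-x(u)) on the range of u,
  where x(u) is the inverse of u on [x_i, infinity); zero outside that range.\<close>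
definition up2 :: "real \<Rightarrow> (real \<Rightarrow> real) \<Rightarrow> real \<Rightarrow> real" where
  "up2 xi f u = (if u \<in> up_u xi f ` {xi..}
                 then exp (- the_inv_into {xi..} (up_u xi f) u) else 0)"

definition sigma :: "real \<Rightarrow> (real \<Rightarrow> real) \<Rightarrow> ennreal" where
  "sigma p h = (let I = (\<integral>\<^sup>+ u. ennreal (\<bar>u\<bar> powr p * h u) \<partial>lborel)
                in if I = \<infinity> then \<infinity> else ennreal ((enn2real I) powr (1 / p)))"

end

theory Submission
  imports Defs "HOL-Real_Asymp.Real_Asymp"
begin

(*
  Put F(x) = int_{x_i}^x e^v f(v) dv, so that u(x) = -F(x).  F is continuous and strictly
  increasing with F(x_i) = 0, and in all three cases F(x) -> oo.  Hence U_2[f](u) = exp(-x(u))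
  for u <= 0 and U_2[f](u) = 0 for u > 0, where F(x(u)) = |u| and x(u) -> oo as u -> -oo:
  every tail estimate for U_2[f] is an estimate of the growth of F, pulled back along x(u).
  e^x f_1(x) ~ C_1 gives F(x) ~ C_1 x, hence exponential decay.  e^x f_2(x) ~ C_2 e^((1-\<xi>) x)
  gives F(x) ~ C_2/(1-\<xi>) e^((1-\<xi>) x), which inverts to U_2[f_2](u) ~ c ((1-\<xi>)|u|)^(1/(\<xi>-1)).
  e^x f_3(x) ~ C_3 e^x x^(-\<eta>) gives F(x) >= C_3/2 e^(x-1) x^(-\<eta>), so F(x)^(p+1) >= e^x
  eventually, i.e. U_2[f_3](u) >= |u|^(-(p+1)) near -oo, and the p-th moment diverges.
*)

lemma integral_pos_real:
  fixes g :: "real \<Rightarrow> real"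
  assumes g: "g integrable_on {a..b}" and ab: "a < b" and pos: "\<And>x. x \<in> {a..b} \<Longrightarrow> 0 < g x"
  shows "0 < integral {a..b} g"
proof -
  have "g absolutely_integrable_on {a..b}"
    using g pos by (intro nonnegative_absolutely_integrable_1) (auto intro: less_imp_le)
  then have int: "integrable (lebesgue_on {a..b}) g"
    by (simp add: integrable_restrict_space set_integrable_def)
  interpret finite_measure "lebesgue_on {a..b}"
    by (rule finite_measure_lebesgue_on) simp
  have "integral\<^sup>L (lebesgue_on {a..b}) (\<lambda>_. 0) < integral\<^sup>L (lebesgue_on {a..b}) g"
    using ab pos by (intro integral_less_AE_space[OF _ int]) (auto simp: emeasure_restrict_space)
  also have "integral\<^sup>L (lebesgue_on {a..b}) g = integral {a..b} g"
    using int by (intro lebesgue_integral_eq_integral) auto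
  finally show ?thesis by simp
qed

lemma integral_deviation_le:
  fixes g \<phi> \<Phi> :: "real \<Rightarrow> real"
  assumes g: "g integrable_on {a..x}" and s: "a \<le> s" "s \<le> x"
    and \<Phi>: "(\<phi> has_integral (\<Phi> x - \<Phi> s)) {s..x}"
    and close: "\<And>v. v \<in> {s..x} \<Longrightarrow> \<bar>g v - \<phi> v\<bar> \<le> \<epsilon> * \<phi> v"
  shows "\<bar>integral {a..x} g - \<Phi> x\<bar> \<le> \<bar>integral {a..s} g - \<Phi> s\<bar> + \<epsilon> * (\<Phi> x - \<Phi> s)"
proof -
  have g_int: "g integrable_on {s..x}"
    using g by (rule integrable_on_subinterval) (use s in simp)
  have "norm (integral {s..x} (\<lambda>v. g v - \<phi> v)) \<le> integral {s..x} (\<lambda>v. \<epsilon> * \<phi> v)"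
  proof (rule integral_norm_bound_integral)
    show "(\<lambda>v. g v - \<phi> v) integrable_on {s..x}"
      using g_int \<Phi> by (intro integrable_diff) auto
    show "(\<lambda>v. \<epsilon> * \<phi> v) integrable_on {s..x}"
      using \<Phi> by (intro integrable_on_mult_right) auto
  qed (simp add: close)
  also have "integral {s..x} (\<lambda>v. g v - \<phi> v) = integral {s..x} g - (\<Phi> x - \<Phi> s)"
    using \<Phi> g_int by (subst integral_diff) (auto simp: integral_unique)
  also have "integral {s..x} (\<lambda>v. \<epsilon> * \<phi> v) = \<epsilon> * (\<Phi> x - \<Phi> s)"
    using \<Phi> by (simp add: integral_unique)
  also have "integral {s..x} g = integral {a..x} g - integral {a..s} g"
    using Henstock_Kurzweil_Integration.integral_combine[OF s g] by simp
  finally show ?thesis by simp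
qed

lemma integral_asymp_equiv_at_top:
  fixes g \<phi> \<Phi> :: "real \<Rightarrow> real"
  assumes g: "\<And>b. g integrable_on {a..b}"
    and equiv: "g \<sim>[at_top] \<phi>" and \<phi>_pos: "\<And>v. 0 < \<phi> v"
    and \<Phi>: "\<And>s t. s \<le> t \<Longrightarrow> (\<phi> has_integral (\<Phi> t - \<Phi> s)) {s..t}"
    and \<Phi>_at_top: "filterlim \<Phi> at_top at_top"
  shows "(\<lambda>x. integral {a..x} g) \<sim>[at_top] \<Phi>"
  unfolding asymp_equiv_altdef
proof (rule landau_o.smallI)
  fix c :: real assume c: "c > 0"
  have "(\<lambda>v. g v - \<phi> v) \<in> o[at_top](\<phi>)"
    using equiv by (rule asymp_equiv_imp_diff_smallo)
  from landau_o.smallD[OF this, of "c / 2"] c obtain A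
    where A: "\<And>v. A \<le> v \<Longrightarrow> \<bar>g v - \<phi> v\<bar> \<le> c / 2 * \<phi> v"
    using \<phi>_pos by (auto simp: eventually_at_top_linorder abs_of_pos)
  define s where "s = max A a"
  \<comment> \<open>the error accumulated on \<open>[a, s]\<close> is a constant, eventually negligible against \<open>\<Phi>\<close>\<close>
  define K where "K = \<bar>integral {a..s} g - \<Phi> s\<bar> + c / 2 * \<bar>\<Phi> s\<bar>"
  have K: "0 \<le> K" using c by (simp add: K_def)
  have bound: "\<bar>integral {a..x} g - \<Phi> x\<bar> \<le> K + c / 2 * \<Phi> x" if "s \<le> x" for x
  proof -
    have "\<bar>integral {a..x} g - \<Phi> x\<bar> \<le> \<bar>integral {a..s} g - \<Phi> s\<bar> + c / 2 * (\<Phi> x - \<Phi> s)"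
    proof (rule integral_deviation_le[OF g _ that \<Phi>[OF that]])
      show "a \<le> s" by (simp add: s_def)
      show "\<bar>g v - \<phi> v\<bar> \<le> c / 2 * \<phi> v" if "v \<in> {s..x}" for v
        using A that by (simp add: s_def)
    qed
    moreover have "- (c / 2 * \<Phi> s) \<le> c / 2 * \<bar>\<Phi> s\<bar>"
      using mult_left_mono[of "- \<Phi> s" "\<bar>\<Phi> s\<bar>" "c / 2"] c by simp
    ultimately show ?thesis
      unfolding K_def right_diff_distrib by linarith
  qed
  have "eventually (\<lambda>x. 2 * K / c \<le> \<Phi> x \<and> s \<le> x) at_top"
    using \<Phi>_at_top by (intro eventually_conj) (auto simp: filterlim_at_top)
  then show "eventually (\<lambda>x. norm (integral {a..x} g - \<Phi> x) \<le> c * norm (\<Phi> x)) at_top"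
  proof eventually_elim
    case (elim x)
    have "0 \<le> 2 * K / c" using K c by simp
    with elim have "0 \<le> \<Phi> x" by linarith
    moreover have "K \<le> c / 2 * \<Phi> x" using elim c by (simp add: field_simps)
    ultimately show ?case using bound[of x] elim by simp
  qed
qed

lemma sigma_less_top_iff:
  "sigma p h < \<infinity> \<longleftrightarrow> (\<integral>\<^sup>+u. ennreal (\<bar>u\<bar> powr p * h u) \<partial>lborel) < \<infinity>"
  by (simp add: sigma_def Let_def top.not_eq_extremum)

lemma sigma_eq_top_iff:
  "sigma p h = \<infinity> \<longleftrightarrow> (\<integral>\<^sup>+u. ennreal (\<bar>u\<bar> powr p * h u) \<partial>lborel) = \<infinity>"
  by (simp add: sigma_def Let_def)

lemma nn_integral_lborel_reflect:
  fixes \<phi> :: "real \<Rightarrow> ennreal"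
  assumes "\<phi> \<in> borel_measurable borel"
  shows "(\<integral>\<^sup>+u. \<phi> (- u) \<partial>lborel) = (\<integral>\<^sup>+u. \<phi> u \<partial>lborel)"
  using nn_integral_real_affine[OF assms, of "-1" 0] by simp

lemma nn_integral_powr_at_top_less_top:
  assumes "r < - 1" "0 < R" "0 \<le> c"
  shows "(\<integral>\<^sup>+u. ennreal (c * u powr r) * indicator {R..} u \<partial>lborel) < \<infinity>"
proof -
  have "((\<lambda>u. c * u powr r) has_integral c * - (R powr (r + 1) / (r + 1))) {R..}"
    using has_integral_powr_to_inf[OF assms(1,2)] by (intro has_integral_mult_right) simp
  from nn_integral_has_integral_lebesgue'[OF _ this] assms(2,3) show ?thesis
    by simp
qed

lemma nn_integral_moment_finite:
  fixes h :: "real \<Rightarrow> real"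
  assumes nonneg: "\<And>u. 0 \<le> h u" and bounded: "\<And>u. h u \<le> B"
    and vanish: "\<And>u. 0 < u \<Longrightarrow> h u = 0"
    and p: "0 \<le> p" and q: "p + 1 < q"
    and decay: "h \<in> O[at_bot](\<lambda>u. \<bar>u\<bar> powr - q)"
  shows "(\<integral>\<^sup>+u. ennreal (\<bar>u\<bar> powr p * h u) \<partial>lborel) < \<infinity>"
proof -
  from decay obtain c R0 where c: "0 < c" and R0: "\<And>u. u \<le> R0 \<Longrightarrow> h u \<le> c * \<bar>u\<bar> powr - q"
    using nonneg by (elim landau_o.bigE) (auto simp: eventually_at_bot_linorder)
  define R where "R = max 1 (- R0)"
  have R: "1 \<le> R" by (simp add: R_def)
  define tail where "tail u = ennreal (c * u powr (p - q)) * indicator {R..} u" for u :: real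
  have "(\<integral>\<^sup>+u. ennreal (\<bar>u\<bar> powr p * h u) \<partial>lborel)
      \<le> (\<integral>\<^sup>+u. ennreal (R powr p * B) * indicator {-R..0} u + tail (- u) \<partial>lborel)"
  proof (rule nn_integral_mono)
    fix u :: real
    consider "0 < u" | "u \<le> - R" | "- R < u" "u \<le> 0" by linarith
    then show "ennreal (\<bar>u\<bar> powr p * h u) \<le> ennreal (R powr p * B) * indicator {-R..0} u + tail (- u)"
    proof cases
      case 2
      then have "\<bar>u\<bar> powr p * h u \<le> \<bar>u\<bar> powr p * (c * \<bar>u\<bar> powr - q)"
        using R0[of u] by (intro mult_left_mono) (auto simp: R_def)
      also have "\<dots> = c * (- u) powr (p - q)"
        using 2 R by (simp add: powr_diff powr_minus divide_inverse)
      finally show ?thesis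
        using 2 by (auto simp: tail_def intro!: ennreal_leI add_increasing)
    next
      case 3
      have "\<bar>u\<bar> powr p * h u \<le> R powr p * B"
        using 3 p nonneg[of u] bounded[of u] by (intro mult_mono powr_mono2) auto
      then show ?thesis
        using 3 by (auto intro!: ennreal_leI add_increasing2)
    qed (simp add: vanish)
  qed
  also have "\<dots> = ennreal (R powr p * B) * ennreal R + (\<integral>\<^sup>+u. tail (- u) \<partial>lborel)"
    using R by (subst nn_integral_add) (auto simp: tail_def nn_integral_cmult_indicator)
  also have "\<dots> = ennreal (R powr p * B) * ennreal R + (\<integral>\<^sup>+u. tail u \<partial>lborel)"
    by (subst nn_integral_lborel_reflect) (simp_all add: tail_def[abs_def])
  also have "\<dots> < \<infinity>"
    using nn_integral_powr_at_top_less_top[of "p - q" R c] q R c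
    by (simp add: tail_def ennreal_mult_less_top)
  finally show ?thesis .
qed

lemma nn_integral_reciprocal_at_top:
  assumes c: "0 < c" and R: "0 < R"
  shows "(\<integral>\<^sup>+u. ennreal (c / u) * indicator {R..} u \<partial>lborel) = \<infinity>"
proof (rule ccontr)
  let ?I = "\<integral>\<^sup>+u. ennreal (c / u) * indicator {R..} u \<partial>lborel"
  assume "?I \<noteq> \<infinity>"
  then obtain r where r: "?I = ennreal r" "0 \<le> r" by (cases ?I) auto
  define T where "T = R * exp (r / c + 1)"
  have "0 \<le> r / c" using r c by simp
  then have RT: "R < T" using R by (simp add: T_def)
  have "((\<lambda>u. c / u) has_integral (c * ln T - c * ln R)) {R..T}"
    using R RT by (intro fundamental_theorem_of_calculus)
      (auto intro!: derivative_eq_intros simp flip: has_real_derivative_iff_has_vector_derivative)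
  then have "ennreal (c * ln T - c * ln R) = (\<integral>\<^sup>+u. ennreal (c / u) * indicator {R..T} u \<partial>lborel)"
    using R c by (subst nn_integral_has_integral_lebesgue') auto
  also have "\<dots> \<le> ?I"
    by (intro nn_integral_mono) (simp add: indicator_def)
  finally have "c * ln T - c * ln R \<le> r"
    using r RT R c by simp
  then show False
    using R c by (simp add: T_def ln_mult algebra_simps)
qed

lemma nn_integral_moment_infinite:
  fixes h :: "real \<Rightarrow> real"
  assumes nonneg: "\<And>u. 0 \<le> h u" and q: "q \<le> p + 1"
    and heavy: "h \<in> \<Omega>[at_bot](\<lambda>u. \<bar>u\<bar> powr - q)"
  shows "(\<integral>\<^sup>+u. ennreal (\<bar>u\<bar> powr p * h u) \<partial>lborel) = \<infinity>"
proof -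
  from heavy obtain c R0 where c: "0 < c" and R0: "\<And>u. u \<le> R0 \<Longrightarrow> c * \<bar>u\<bar> powr - q \<le> h u"
    using nonneg by (elim landau_omega.bigE) (auto simp: eventually_at_bot_linorder)
  define R where "R = max 1 (- R0)"
  have R: "1 \<le> R" by (simp add: R_def)
  have lower: "c / (- u) \<le> \<bar>u\<bar> powr p * h u" if u: "u \<le> - R" for u
  proof -
    have "c / (- u) = c * (- u) powr - 1"
      using u R by (simp add: powr_minus divide_inverse)
    also have "\<dots> \<le> c * (- u) powr (p - q)"
      using u R q c by (intro mult_left_mono powr_mono) auto
    also have "\<dots> = \<bar>u\<bar> powr p * (c * \<bar>u\<bar> powr - q)"
      using u R by (simp add: powr_diff powr_minus divide_inverse)
    also have "\<dots> \<le> \<bar>u\<bar> powr p * h u"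
      using u R0[of u] by (intro mult_left_mono) (auto simp: R_def)
    finally show ?thesis .
  qed
  have "\<infinity> = (\<integral>\<^sup>+u. ennreal (c / u) * indicator {R..} u \<partial>lborel)"
    using c R by (simp add: nn_integral_reciprocal_at_top)
  also have "\<dots> = (\<integral>\<^sup>+u. ennreal (c / (- u)) * indicator {R..} (- u) \<partial>lborel)"
    by (rule nn_integral_lborel_reflect[symmetric]) simp
  also have "\<dots> \<le> (\<integral>\<^sup>+u. ennreal (\<bar>u\<bar> powr p * h u) \<partial>lborel)"
    using lower by (intro nn_integral_mono) (auto simp: indicator_def intro!: ennreal_leI)
  finally show ?thesis by (simp add: top_unique)
qed

lemma not_bounded_atMost_real: "\<not> bounded {..a :: real}"
proof
  assume "bounded {..a}"
  then obtain B where "\<And>x. x \<le> a \<Longrightarrow> \<bar>x\<bar> \<le> B" by (auto simp: bounded_real)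
  from this[of "min a (- \<bar>B\<bar> - 1)"] show False by linarith
qed

locale up_transform =
  fixes xi :: real and f :: "real \<Rightarrow> real"
  assumes f_pos: "\<And>x. xi \<le> x \<Longrightarrow> 0 < f x"
    and f_integrable: "\<And>b. f integrable_on {xi..b}"
begin

definition g :: "real \<Rightarrow> real" where "g v = exp v * f v"

definition F :: "real \<Rightarrow> real" where "F x = integral {xi..x} g"

lemma up_u_eq: "up_u xi f x = - F x"
  by (simp add: up_u_def F_def g_def[abs_def])

lemma g_pos: "xi \<le> v \<Longrightarrow> 0 < g v"
  by (simp add: g_def f_pos)

lemma g_integrable:
  assumes "xi \<le> a"
  shows "g integrable_on {a..b}"
proof -
  have "f absolutely_integrable_on {a..b}"
    using assms f_pos
    by (intro nonnegative_absolutely_integrable_1 integrable_on_subinterval[OF f_integrable[of b]])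
       (auto intro: less_imp_le)
  then have "(\<lambda>v. exp v * f v) absolutely_integrable_on {a..b}"
    by (intro absolutely_integrable_bounded_measurable_product_real
          continuous_imp_measurable_on_sets_lebesgue continuous_intros
          compact_imp_bounded compact_continuous_image) auto
  then show ?thesis
    by (simp add: g_def[abs_def] absolutely_integrable_on_def)
qed

lemma F_add:
  assumes "xi \<le> a" "a \<le> b"
  shows "F b = F a + integral {a..b} g"
  using Henstock_Kurzweil_Integration.integral_combine[OF assms g_integrable[of xi b]]
  by (simp add: F_def)

lemma F_strict_mono: "strict_mono_on {xi..} F"
proof (rule strict_mono_onI)
  fix a b assume "a \<in> {xi..}" "b \<in> {xi..}" "a < b"
  then show "F a < F b"
    using F_add[of a b] integral_pos_real[OF g_integrable, of a b] g_pos by auto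
qed

lemma F_nonneg: "xi \<le> x \<Longrightarrow> 0 \<le> F x"
  using strict_mono_on_leD[OF F_strict_mono, of xi x] by (simp add: F_def)

lemma F_continuous: "continuous_on {xi..b} F"
  unfolding F_def[abs_def] by (rule indefinite_integral_continuous_1) (simp add: g_integrable)

lemma F_ge_of_g_ge_on_unit_interval:
  assumes "xi \<le> x - 1" and m: "\<And>v. v \<in> {x - 1..x} \<Longrightarrow> m \<le> g v"
  shows "m \<le> F x"
proof -
  have "m = integral {x - 1..x} (\<lambda>_. m)" by simp
  also have "\<dots> \<le> integral {x - 1..x} g"
    using assms m by (intro integral_le g_integrable) auto
  also have "\<dots> \<le> F x"
    using F_add[of "x - 1" x] F_nonneg[of "x - 1"] assms by simp
  finally show ?thesis .
qed

lemma g_asymp_equiv: "f \<sim>[at_top] \<psi> \<Longrightarrow> g \<sim>[at_top] (\<lambda>v. exp v * \<psi> v)"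
  unfolding g_def[abs_def] by (intro asymp_equiv_intros)

lemma inj_on_up_u: "inj_on (up_u xi f) {xi..}"
  using strict_mono_on_imp_inj_on[OF F_strict_mono] by (simp add: inj_on_def up_u_eq)

lemma up2_cases: "up2 xi f u = 0 \<or> (\<exists>x\<ge>xi. u = - F x \<and> up2 xi f u = exp (- x))"
proof (cases "u \<in> up_u xi f ` {xi..}")
  case True
  then obtain x where x: "xi \<le> x" "u = up_u xi f x" by auto
  then have "up2 xi f u = exp (- x)"
    using x by (simp add: up2_def the_inv_into_f_f[OF inj_on_up_u])
  with x show ?thesis by (auto simp: up_u_eq)
qed (simp add: up2_def)

lemma up2_nonneg: "0 \<le> up2 xi f u"
  using up2_cases[of u] by auto

lemma up2_le: "up2 xi f u \<le> exp (- xi)"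
  using up2_cases[of u] by auto

lemma up2_eq_0: "0 < u \<Longrightarrow> up2 xi f u = 0"
  using up2_cases[of u] F_nonneg by fastforce

lemma F_asymp_equiv:
  assumes equiv: "g \<sim>[at_top] \<phi>" and \<phi>_pos: "\<And>v. 0 < \<phi> v"
    and \<Phi>: "\<And>s t. s \<le> t \<Longrightarrow> (\<phi> has_integral (\<Phi> t - \<Phi> s)) {s..t}"
    and \<Phi>_at_top: "filterlim \<Phi> at_top at_top"
  shows "F \<sim>[at_top] \<Phi>" and "filterlim F at_top at_top"
proof -
  show F_equiv: "F \<sim>[at_top] \<Phi>"
    unfolding F_def[abs_def]
    by (rule integral_asymp_equiv_at_top[OF g_integrable[OF order_refl] equiv \<phi>_pos \<Phi> \<Phi>_at_top])
  show "filterlim F at_top at_top"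
    using asymp_equiv_symI[OF F_equiv] \<Phi>_at_top by (rule asymp_equiv_at_top_transfer)
qed

lemma sigma_up2_less_top:
  assumes "up2 xi f \<in> O[at_bot](\<lambda>u. \<bar>u\<bar> powr - q)" "0 \<le> p" "p + 1 < q"
  shows "sigma p (up2 xi f) < \<infinity>"
  unfolding sigma_less_top_iff
  using nn_integral_moment_finite[OF up2_nonneg up2_le up2_eq_0 assms(2,3,1)] .

lemma sigma_up2_eq_top:
  assumes "up2 xi f \<in> \<Omega>[at_bot](\<lambda>u. \<bar>u\<bar> powr - q)" "q \<le> p + 1"
  shows "sigma p (up2 xi f) = \<infinity>"
  unfolding sigma_eq_top_iff
  using nn_integral_moment_infinite[OF up2_nonneg assms(2,1)] .

lemma sigma_up2_less_top_of_exp_decay: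
  assumes decay: "up2 xi f \<in> O[at_bot](\<lambda>u. exp (- a * \<bar>u\<bar>))" and a: "0 < a" and p: "0 \<le> p"
  shows "sigma p (up2 xi f) < \<infinity>"
proof -
  have "(\<lambda>u. exp (- a * \<bar>u\<bar>)) \<in> O[at_bot](\<lambda>u. \<bar>u\<bar> powr - (p + 2))"
    using a by real_asymp
  with decay have "up2 xi f \<in> O[at_bot](\<lambda>u. \<bar>u\<bar> powr - (p + 2))"
    by (rule landau_o.big_trans)
  with p show ?thesis
    by (intro sigma_up2_less_top[where q = "p + 2"]) auto
qed

definition u_inv :: "real \<Rightarrow> real" where
  "u_inv u = the_inv_into {xi..} (up_u xi f) u"

context
  assumes F_at_top: "filterlim F at_top at_top"
begin

lemma F_image: "F ` {xi..} = {0..}"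
proof
  show "F ` {xi..} \<subseteq> {0..}" using F_nonneg by auto
  show "{0..} \<subseteq> F ` {xi..}"
  proof
    fix t :: real assume t: "t \<in> {0..}"
    have "eventually (\<lambda>x. t \<le> F x \<and> xi \<le> x) at_top"
      using F_at_top by (intro eventually_conj) (simp_all add: filterlim_at_top)
    then obtain b where b: "t \<le> F b" "xi \<le> b" by (auto simp: eventually_at_top_linorder)
    then obtain x where "xi \<le> x" "x \<le> b" "F x = t"
      using IVT'[of F xi t b] F_continuous[of b] t by (auto simp: F_def)
    then show "t \<in> F ` {xi..}" by auto
  qed
qed

lemma u_inv_nonpos:
  assumes "u \<le> 0"
  shows "xi \<le> u_inv u" "F (u_inv u) = - u" "up2 xi f u = exp (- u_inv u)"
proof -
  have "- u \<in> F ` {xi..}" using F_image assms by simp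
  then obtain x where x: "xi \<le> x" "u = up_u xi f x"
    by (auto simp: up_u_eq)
  then have "u_inv u = x"
    by (simp add: u_inv_def the_inv_into_f_f[OF inj_on_up_u])
  with x show "xi \<le> u_inv u" "F (u_inv u) = - u" "up2 xi f u = exp (- u_inv u)"
    by (auto simp: up_u_eq up2_def u_inv_def)
qed

lemma up2_support: "{u. up2 xi f u \<noteq> 0} = {..0}"
proof (intro set_eqI)
  show "u \<in> {u. up2 xi f u \<noteq> 0} \<longleftrightarrow> u \<in> {..0}" for u
    by (cases "u \<le> 0") (simp_all add: u_inv_nonpos(3) up2_eq_0)
qed

lemma u_inv_at_top: "filterlim u_inv at_top at_bot"
  unfolding filterlim_at_top
proof
  fix z :: real
  define x where "x = max z xi"
  have "eventually (\<lambda>u. u \<le> - F x) at_bot" by simp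
  then show "eventually (\<lambda>u. z \<le> u_inv u) at_bot"
  proof eventually_elim
    case (elim u)
    then have "u \<le> 0" using F_nonneg[of x] by (simp add: x_def)
    with elim have "F x \<le> F (u_inv u)" by (simp add: u_inv_nonpos)
    then have "x \<le> u_inv u"
      using strict_mono_on_less_eq[OF F_strict_mono, of x "u_inv u"] u_inv_nonpos(1)[OF \<open>u \<le> 0\<close>]
      by (simp add: x_def)
    then show ?case by (simp add: x_def)
  qed
qed

lemma up2_eventually_at_bot:
  assumes "eventually (\<lambda>x. P (F x) (exp (- x))) at_top"
  shows "eventually (\<lambda>u. P \<bar>u\<bar> (up2 xi f u)) at_bot"
  using eventually_compose_filterlim[OF assms u_inv_at_top] eventually_le_at_bot[of 0]
  by eventually_elim (simp add: u_inv_nonpos)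

lemma up2_asymp_equiv_at_bot:
  assumes "(\<lambda>x. h (F x)) \<sim>[at_top] (\<lambda>x. exp (- x))"
  shows "up2 xi f \<sim>[at_bot] (\<lambda>u. h \<bar>u\<bar>)"
proof -
  have "(\<lambda>u. h (F (u_inv u))) \<sim>[at_bot] (\<lambda>u. exp (- u_inv u))"
    using assms u_inv_at_top by (rule asymp_equiv_compose')
  moreover have "eventually (\<lambda>u. h (F (u_inv u)) = h \<bar>u\<bar> \<and> exp (- u_inv u) = up2 xi f u) at_bot"
    using eventually_le_at_bot[of 0] by eventually_elim (simp add: u_inv_nonpos)
  ultimately have "(\<lambda>u. h \<bar>u\<bar>) \<sim>[at_bot] up2 xi f"
    by (subst (asm) asymp_equiv_cong) (auto elim: eventually_mono)
  then show ?thesis by (rule asymp_equiv_symI)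
qed

end

lemma exponential_tail:
  assumes C: "0 < C" and asym: "f \<sim>[at_top] (\<lambda>x. C * exp (- x))"
  shows "filterlim F at_top at_top"
    and "\<exists>a>0. up2 xi f \<in> O[at_bot](\<lambda>u. exp (- a * \<bar>u\<bar>))"
    and "\<forall>p>0. sigma p (up2 xi f) < \<infinity>"
proof -
  have "g \<sim>[at_top] (\<lambda>v. exp v * (C * exp (- v)))"
    using asym by (rule g_asymp_equiv)
  also have "(\<lambda>v. exp v * (C * exp (- v))) = (\<lambda>_. C)"
    by (simp add: exp_minus field_simps)
  finally have g_equiv: "g \<sim>[at_top] (\<lambda>_. C)" .
  have \<Phi>: "((\<lambda>_. C) has_integral C * t - C * s) {s..t}" if "s \<le> t" for s t
    using has_integral_const_real[of C s t] that by (simp add: algebra_simps)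
  have \<Phi>_at_top: "filterlim (\<lambda>x. C * x) at_top at_top"
    using C by real_asymp
  note F_asymp = F_asymp_equiv[OF g_equiv _ \<Phi> \<Phi>_at_top]
  from F_asymp(1) C have F_equiv: "F \<sim>[at_top] (\<lambda>x. C * x)" by simp
  from F_asymp(2) C show F_at_top: "filterlim F at_top at_top" by simp
  define a where "a = 1 / (2 * C)"
  have "eventually (\<lambda>x. norm (F x) \<le> 2 * norm (C * x)) at_top"
    using F_equiv by (rule asymp_equiv_imp_eventually_le) simp
  then have "eventually (\<lambda>x. exp (- x) \<le> exp (- a * F x)) at_top"
    using eventually_ge_at_top[of 0] by eventually_elim (use C in \<open>simp add: a_def abs_mult field_simps\<close>)
  then have "eventually (\<lambda>u. up2 xi f u \<le> exp (- a * \<bar>u\<bar>)) at_bot"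
    by (rule up2_eventually_at_bot[OF F_at_top, where P = "\<lambda>t y. y \<le> exp (- a * t)"])
  then have decay: "up2 xi f \<in> O[at_bot](\<lambda>u. exp (- a * \<bar>u\<bar>))"
    by (intro bigoI[of _ 1]) (auto elim!: eventually_mono simp: up2_nonneg)
  moreover have a: "0 < a" using C by (simp add: a_def)
  ultimately show "\<exists>a>0. up2 xi f \<in> O[at_bot](\<lambda>u. exp (- a * \<bar>u\<bar>))" by blast
  show "\<forall>p>0. sigma p (up2 xi f) < \<infinity>"
    using sigma_up2_less_top_of_exp_decay[OF decay a] by simp
qed

lemma stretched_exponential_asymp:
  assumes C: "0 < C" and \<xi>: "0 < \<xi>" "\<xi> < 1"
    and asym: "f \<sim>[at_top] (\<lambda>x. C * exp (- \<xi> * x))"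
  shows "filterlim F at_top at_top"
    and "up2 xi f \<sim>[at_bot] (\<lambda>u. C powr (1 / (1 - \<xi>)) * ((1 - \<xi>) * \<bar>u\<bar>) powr (1 / (\<xi> - 1)))"
proof -
  define s where "s = 1 - \<xi>"
  define e where "e = 1 / (\<xi> - 1)"
  have s: "0 < s" and se: "s * e = - 1" and e: "1 / (1 - \<xi>) = - e"
    using \<xi> by (simp_all add: s_def e_def field_simps)
  have "g \<sim>[at_top] (\<lambda>v. exp v * (C * exp (- \<xi> * v)))"
    using asym by (rule g_asymp_equiv)
  also have "(\<lambda>v. exp v * (C * exp (- \<xi> * v))) = (\<lambda>v. C * exp (s * v))"
    by (simp add: s_def algebra_simps flip: exp_add)
  finally have g_equiv: "g \<sim>[at_top] (\<lambda>v. C * exp (s * v))" .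
  have \<Phi>: "((\<lambda>v. C * exp (s * v)) has_integral C / s * exp (s * b) - C / s * exp (s * a)) {a..b}"
    if "a \<le> b" for a b
    using s that by (intro fundamental_theorem_of_calculus)
      (auto intro!: derivative_eq_intros simp flip: has_real_derivative_iff_has_vector_derivative)
  have \<Phi>_at_top: "filterlim (\<lambda>x. C / s * exp (s * x)) at_top at_top"
    using C s by real_asymp
  note F_asymp = F_asymp_equiv[OF g_equiv _ \<Phi> \<Phi>_at_top]
  from F_asymp(1) C have F_equiv: "F \<sim>[at_top] (\<lambda>x. C / s * exp (s * x))" by simp
  from F_asymp(2) C show F_at_top: "filterlim F at_top at_top" by simp
  have "(\<lambda>x. C powr - e * (s * F x) powr e) \<sim>[at_top] (\<lambda>x. C powr - e * (s * (C / s * exp (s * x))) powr e)"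
  proof (intro asymp_equiv_intros)
    show "eventually (\<lambda>x. 0 \<le> s * F x) at_top"
      using eventually_ge_at_top[of xi] by eventually_elim (use s F_nonneg in simp)
  qed (use F_equiv s C in simp_all)
  also have "(\<lambda>x. C powr - e * (s * (C / s * exp (s * x))) powr e) = (\<lambda>x. exp (- x))"
  proof
    fix x
    have "C powr - e * (s * (C / s * exp (s * x))) powr e = (C powr - e * C powr e) * exp (x * (s * e))"
      using s C by (simp add: powr_mult exp_powr_real ac_simps)
    also have "\<dots> = exp (- x)"
      using C se by (simp flip: powr_add)
    finally show "C powr - e * (s * (C / s * exp (s * x))) powr e = exp (- x)" .
  qed
  finally show "up2 xi f \<sim>[at_bot] (\<lambda>u. C powr (1 / (1 - \<xi>)) * ((1 - \<xi>) * \<bar>u\<bar>) powr (1 / (\<xi> - 1)))"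
    using up2_asymp_equiv_at_bot[OF F_at_top, of "\<lambda>t. C powr - e * (s * t) powr e"]
    by (simp add: e s_def e_def)
qed

lemma stretched_exponential_tail:
  assumes C: "0 < C" and \<xi>: "0 < \<xi>" "\<xi> < 1"
    and asym: "f \<sim>[at_top] (\<lambda>x. C * exp (- \<xi> * x))"
  shows "filterlim F at_top at_top"
    and "\<exists>c>0. \<exists>k. up2 xi f \<sim>[at_bot] (\<lambda>u. c * ((1 - \<xi>) * \<bar>u\<bar> + k) powr (1 / (\<xi> - 1)))"
    and "\<forall>p. 0 < p \<and> p < \<xi> / (1 - \<xi>) \<longrightarrow> sigma p (up2 xi f) < \<infinity>"
proof -
  define c where "c = C powr (1 / (1 - \<xi>))"
  define e where "e = 1 / (\<xi> - 1)"
  have c: "0 < c" using C by (simp add: c_def)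
  note asymp = stretched_exponential_asymp[OF C \<xi> asym]
  show "filterlim F at_top at_top" by (rule asymp(1))
  have equiv: "up2 xi f \<sim>[at_bot] (\<lambda>u. c * ((1 - \<xi>) * \<bar>u\<bar> + 0) powr e)"
    using asymp(2) by (simp add: c_def e_def)
  with c show "\<exists>c>0. \<exists>k. up2 xi f \<sim>[at_bot] (\<lambda>u. c * ((1 - \<xi>) * \<bar>u\<bar> + k) powr (1 / (\<xi> - 1)))"
    unfolding e_def by blast
  show "\<forall>p. 0 < p \<and> p < \<xi> / (1 - \<xi>) \<longrightarrow> sigma p (up2 xi f) < \<infinity>"
  proof (intro allI impI)
    fix p :: real assume p: "0 < p \<and> p < \<xi> / (1 - \<xi>)"
    have "(\<lambda>u. c * ((1 - \<xi>) * \<bar>u\<bar> + 0) powr e) \<in> O[at_bot](\<lambda>u. \<bar>u\<bar> powr - (- e))"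
      using c \<xi> by real_asymp
    with asymp_equiv_imp_bigo[OF equiv] have decay: "up2 xi f \<in> O[at_bot](\<lambda>u. \<bar>u\<bar> powr - (- e))"
      by (rule landau_o.big_trans)
    have "\<xi> / (1 - \<xi>) = - e - 1"
      using \<xi> by (simp add: e_def field_simps)
    with p have "p + 1 < - e" by linarith
    with decay p show "sigma p (up2 xi f) < \<infinity>"
      by (intro sigma_up2_less_top) auto
  qed
qed

lemma power_tail_F_lower:
  assumes C: "0 < C" and \<eta>: "1 < \<eta>"
    and asym: "f \<sim>[at_top] (\<lambda>x. C * x powr - \<eta>)"
  shows "eventually (\<lambda>x. C / 2 * exp (x - 1) * x powr - \<eta> \<le> F x) at_top"
proof -
  have "g \<sim>[at_top] (\<lambda>v. exp v * (C * v powr - \<eta>))"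
    using asym by (rule g_asymp_equiv)
  then have "eventually (\<lambda>v. norm (g v) \<ge> 1 / 2 * norm (exp v * (C * v powr - \<eta>))) at_top"
    by (rule asymp_equiv_imp_eventually_ge) simp
  then have "eventually (\<lambda>v. C / 2 * exp v * v powr - \<eta> \<le> g v) at_top"
    using eventually_ge_at_top[of xi] eventually_gt_at_top[of 0]
    by eventually_elim (use C g_pos in \<open>simp add: abs_mult less_imp_le mult_ac\<close>)
  then obtain A where A: "\<And>v. A \<le> v \<Longrightarrow> C / 2 * exp v * v powr - \<eta> \<le> g v"
    by (auto simp: eventually_at_top_linorder)
  have "C / 2 * exp (x - 1) * x powr - \<eta> \<le> F x" if x: "max A (max xi 1) + 1 \<le> x" for x
  proof (rule F_ge_of_g_ge_on_unit_interval)
    have "max A (max xi 1) \<le> x - 1" using x by linarith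
    then have x1: "A \<le> x - 1" "xi \<le> x - 1" "1 \<le> x - 1" by simp_all
    then show "xi \<le> x - 1" by simp
    fix v assume v: "v \<in> {x - 1..x}"
    have "exp (x - 1) \<le> exp v" using v by simp
    moreover have "x powr - \<eta> \<le> v powr - \<eta>"
      using v x1 \<eta> by (intro powr_mono2') auto
    ultimately have "C / 2 * exp (x - 1) * x powr - \<eta> \<le> C / 2 * exp v * v powr - \<eta>"
      using C by (intro mult_mono) auto
    also have "\<dots> \<le> g v" using A[of v] v x1 by simp
    finally show "C / 2 * exp (x - 1) * x powr - \<eta> \<le> g v" .
  qed
  then show ?thesis
    unfolding eventually_at_top_linorder by blast
qed

lemma power_tail:
  assumes C: "0 < C" and \<eta>: "1 < \<eta>"
    and asym: "f \<sim>[at_top] (\<lambda>x. C * x powr - \<eta>)"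
  shows "filterlim F at_top at_top"
    and "\<forall>p>0. sigma p (up2 xi f) = \<infinity>"
proof -
  define \<phi> where "\<phi> x = C / 2 * exp (x - 1) * x powr - \<eta>" for x
  have F_lower: "eventually (\<lambda>x. \<phi> x \<le> F x) at_top"
    unfolding \<phi>_def by (rule power_tail_F_lower[OF C \<eta> asym])
  have "filterlim \<phi> at_top at_top"
    unfolding \<phi>_def[abs_def] using C \<eta> by real_asymp
  with F_lower show F_at_top: "filterlim F at_top at_top"
    by (rule filterlim_at_top_mono[rotated])
  show "\<forall>p>0. sigma p (up2 xi f) = \<infinity>"
  proof (intro allI impI)
    fix p :: real assume "0 < p"
    have "eventually (\<lambda>x. exp x \<le> \<phi> x powr (p + 1)) at_top"
      unfolding \<phi>_def using C \<eta> \<open>0 < p\<close> by real_asymp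
    then have "eventually (\<lambda>x. F x powr - (p + 1) \<le> exp (- x)) at_top"
      using F_lower eventually_gt_at_top[of 0]
    proof eventually_elim
      case (elim x)
      have "0 \<le> \<phi> x" using C elim by (simp add: \<phi>_def)
      then have "\<phi> x powr (p + 1) \<le> F x powr (p + 1)"
        using elim \<open>0 < p\<close> by (intro powr_mono2) auto
      with elim have "exp x \<le> F x powr (p + 1)" by linarith
      then have "inverse (F x powr (p + 1)) \<le> inverse (exp x)"
        by (rule le_imp_inverse_le) simp
      then show ?case by (simp only: powr_minus exp_minus)
    qed
    then have "eventually (\<lambda>u. \<bar>u\<bar> powr - (p + 1) \<le> up2 xi f u) at_bot"
      by (rule up2_eventually_at_bot[OF F_at_top, where P = "\<lambda>t y. t powr - (p + 1) \<le> y"])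
    then have "up2 xi f \<in> \<Omega>[at_bot](\<lambda>u. \<bar>u\<bar> powr - (p + 1))"
      by (intro landau_omega.bigI[of 1]) (auto elim!: eventually_mono simp: up2_nonneg)
    then show "sigma p (up2 xi f) = \<infinity>"
      by (rule sigma_up2_eq_top) simp
  qed
qed

end

theorem proposition6:
  fixes xi \<xi> \<eta> C1 C2 C3 :: real and f1 f2 f3 :: "real \<Rightarrow> real"
  assumes pos1: "\<And>x. x \<ge> xi \<Longrightarrow> f1 x > 0"
      and pos2: "\<And>x. x \<ge> xi \<Longrightarrow> f2 x > 0"
      and pos3: "\<And>x. x \<ge> xi \<Longrightarrow> f3 x > 0"
      and dens1: "(f1 has_integral 1) {xi..}"
      and dens2: "(f2 has_integral 1) {xi..}"
      and dens3: "(f3 has_integral 1) {xi..}"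
      and eta: "\<eta> > 1"
      and xi01: "0 < \<xi>" "\<xi> < 1"
      and C: "C1 > 0" "C2 > 0" "C3 > 0"
      and asym1: "f1 \<sim>[at_top] (\<lambda>x. C1 * exp (- x))"
      and asym2: "f2 \<sim>[at_top] (\<lambda>x. C2 * exp (- \<xi> * x))"
      and asym3: "f3 \<sim>[at_top] (\<lambda>x. C3 * x powr (- \<eta>))"
  shows "\<not> bounded {u. up2 xi f1 u \<noteq> 0} \<and> \<not> bounded {u. up2 xi f2 u \<noteq> 0}
           \<and> \<not> bounded {u. up2 xi f3 u \<noteq> 0}
       \<and> (\<exists>a>0. up2 xi f1 \<in> O[at_bot](\<lambda>u. exp (- a * \<bar>u\<bar>)))
       \<and> (\<forall>p>0. sigma p (up2 xi f1) < \<infinity>)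
       \<and> (\<exists>c>0. \<exists>k. up2 xi f2 \<sim>[at_bot] (\<lambda>u. c * ((1 - \<xi>) * \<bar>u\<bar> + k) powr (1 / (\<xi> - 1))))
       \<and> (\<forall>p. 0 < p \<and> p < \<xi> / (1 - \<xi>) \<longrightarrow> sigma p (up2 xi f2) < \<infinity>)
       \<and> (\<forall>p>0. sigma p (up2 xi f3) = \<infinity>)"
proof -
  have local_integrability: "f integrable_on {xi..b}" if "(f has_integral 1) {xi..}" for f :: "real \<Rightarrow> real" and b
    using that by (intro integrable_on_subinterval[of _ "{xi..}"]) auto
  interpret f1: up_transform xi f1
    using pos1 local_integrability[OF dens1] by unfold_locales
  interpret f2: up_transform xi f2
    using pos2 local_integrability[OF dens2] by unfold_locales
  interpret f3: up_transform xi f3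
    using pos3 local_integrability[OF dens3] by unfold_locales
  note tail1 = f1.exponential_tail[OF C(1) asym1]
  note tail2 = f2.stretched_exponential_tail[OF C(2) xi01 asym2]
  note tail3 = f3.power_tail[OF C(3) eta asym3]
  show ?thesis
    using f1.up2_support[OF tail1(1)] f2.up2_support[OF tail2(1)] f3.up2_support[OF tail3(1)]
      tail1(2,3) tail2(2,3) tail3(2) not_bounded_atMost_real
    by simp
qed

end
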